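(* Let $\mathbb{F}$ be a field of characteristic $p>2$. Let $(\mathfrak g,[\cdot,\cdot],B)$ be a quadratic Lie algebra, $[p]:\mathfrak g\to\mathfrak g$ a $p$-mapping, and $\alpha\in\mathrm{End}_s(\mathfrak g,B)$ with $\alpha^2=\mathrm{id}$. Let $\mathfrak g_\alpha=(\mathfrak g,[\cdot,\cdot]_\alpha,\alpha,B_\alpha)$ where $[x,y]_\alpha=\alpha([x,y])$, $B_\alpha(x,y)=B(\alpha(x),y)$, and let $x^{[p]_\alpha}=\alpha^{p-1}(x^{[p]})$. Let $\mathscr{D}$ be a derivation of the Lie algebra $\mathfrak g$ which is restricted with respect to $[p]$, satisfies $\alpha\circ\mathscr{D}=\mathscr{D}\circ\alpha$, and has the $p$-property (there exist $\xi\in\mathbb{F}$, $a_0\in\mathfrak g$ with $\mathscr{D}^p=\xi\mathscr{D}+\mathrm{ad}(a_0)$ and $\mathscr{D}(a_0)=0$). Then $\mathscr{D}_\alpha:=\alpha\circ\mathscr{D}$ is an $\alpha$-derivation of $(\mathfrak g,[\cdot,\cdot]_\alpha,\alpha)$, it is restricted with respect to $[p]_\alpha$, i.e. $\mathscr{D}_\alpha(x^{[p]_\alpha})=[\alpha^{p-1}(x),[\alpha^{p-2}(x),\dots,[\alpha(x),\mathscr{D}_\alpha(x)]_\alpha\dots]_\alpha]_\alpha$ for all $x$, and $\mathscr{D}_\alpha$ has the $p$-property: there exist $\xi'\in\mathbb{F}$, $a_0'\in\mathfrak g$ with $\mathscr{D}_\alpha^p=\xi'\mathscr{D}_\alpha\circ\alpha^{p-1}+[a_0',\cdot]_\alpha\circ\alpha^{p-1}$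 and $\mathscr{D}_\alpha(a_0')=0$.
   Context: A quadratic Lie algebra is a Lie algebra with a symmetric nondegenerate invariant ($B([x,y],z)=B(x,[y,z])$) bilinear form $B$. $\mathrm{End}_s(\mathfrak g,B)$ is the set of linear $\phi$ with $B(\phi x,y)=B(x,\phi y)$. A $p$-mapping is Jacobson's restricted structure: $\mathrm{ad}(x^{[p]})=(\mathrm{ad}x)^p$, $(kx)^{[p]}=k^px^{[p]}$, and the usual sum formula $(x+y)^{[p]}=x^{[p]}+y^{[p]}+\sum_{i=1}^{p-1}s_i(x,y)$. A derivation $\mathscr{D}$ of $\mathfrak g$ is restricted with respect to $[p]$ if $\mathscr{D}(x^{[p]})=(\mathrm{ad}x)^{p-1}(\mathscr{D}(x))$ for all $x$. An $\alpha$-derivation of $(\mathfrak g,[\cdot,\cdot]_\alpha,\alpha)$ is a linear map $T$ with $T\circ\alpha=\alpha\circ T$ and $T([x,y]_\alpha)=[T(x),\alpha(y)]_\alpha+[\alpha(x),T(y)]_\alpha$. *)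

theory Defs
  imports Complex_Main "HOL-Computational_Algebra.Primes"
begin

definition bilinear_form ::
  "('k::field \<Rightarrow> 'v::ab_group_add \<Rightarrow> 'v) \<Rightarrow> ('v \<Rightarrow> 'v \<Rightarrow> 'k) \<Rightarrow> bool" where
  "bilinear_form sc B \<longleftrightarrow>
     (\<forall>x y z. B (x + y) z = B x z + B y z) \<and>
     (\<forall>x y z. B x (y + z) = B x y + B x z) \<and>
     (\<forall>c x y. B (sc c x) y = c * B x y) \<and>
     (\<forall>c x y. B x (sc c y) = c * B x y)"

definition bilinear_map ::
  "('k::field \<Rightarrow> 'v::ab_group_add \<Rightarrow> 'v) \<Rightarrow> ('v \<Rightarrow> 'v \<Rightarrow> 'v) \<Rightarrow> bool" where
  "bilinear_map sc br \<longleftrightarrow>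
     (\<forall>x y z. br (x + y) z = br x z + br y z) \<and>
     (\<forall>x y z. br x (y + z) = br x y + br x z) \<and>
     (\<forall>c x y. br (sc c x) y = sc c (br x y)) \<and>
     (\<forall>c x y. br x (sc c y) = sc c (br x y))"

definition lie_algebra ::
  "('k::field \<Rightarrow> 'v::ab_group_add \<Rightarrow> 'v) \<Rightarrow> ('v \<Rightarrow> 'v \<Rightarrow> 'v) \<Rightarrow> bool" where
  "lie_algebra sc br \<longleftrightarrow> Vector_Spaces.vector_space sc \<and> bilinear_map sc br \<and>
     (\<forall>x. br x x = 0) \<and>
     (\<forall>x y z. br x (br y z) + br y (br z x) + br z (br x y) = 0)"

definition quadratic_lie_algebra ::
  "('k::field \<Rightarrow> 'v::ab_group_add \<Rightarrow> 'v) \<Rightarrow> ('v \<Rightarrow> 'v \<Rightarrow> 'v) \<Rightarrow> ('v \<Rightarrow> 'v \<Rightarrow> 'k) \<Rightarrow> bool" where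
  "quadratic_lie_algebra sc br B \<longleftrightarrow> lie_algebra sc br \<and> bilinear_form sc B \<and>
     (\<forall>x y. B x y = B y x) \<and>
     (\<forall>x. (\<forall>y. B x y = 0) \<longrightarrow> x = 0) \<and>
     (\<forall>x y z. B (br x y) z = B x (br y z))"

definition End_s ::
  "('k::field \<Rightarrow> 'v::ab_group_add \<Rightarrow> 'v) \<Rightarrow> ('v \<Rightarrow> 'v \<Rightarrow> 'k) \<Rightarrow> ('v \<Rightarrow> 'v) set" where
  "End_s sc B = {\<phi>. Vector_Spaces.linear sc sc \<phi> \<and> (\<forall>x y. B (\<phi> x) y = B x (\<phi> y))}"

text \<open>Jacobson's s_i(x,y): i * s_i(x,y) is the coefficient of t^(i-1) in
  (ad(t x + y))^(p-1) (x).  Expanding the power, this coefficient is the sum,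
  over all words of length p-1 in the letters ad x / ad y containing exactly
  i-1 letters ad x, of the corresponding composite applied to x.\<close>
definition ad_word :: "('v \<Rightarrow> 'v \<Rightarrow> 'v) \<Rightarrow> 'v \<Rightarrow> 'v \<Rightarrow> bool list \<Rightarrow> 'v \<Rightarrow> 'v" where
  "ad_word br x y w = foldr (\<lambda>b f. (if b then br x else br y) \<circ> f) w id"

definition jacobson_coeff ::
  "nat \<Rightarrow> ('v::ab_group_add \<Rightarrow> 'v \<Rightarrow> 'v) \<Rightarrow> 'v \<Rightarrow> 'v \<Rightarrow> nat \<Rightarrow> 'v" where
  "jacobson_coeff p br x y j =
     (\<Sum>w\<in>{w. length w = p - 1 \<and> length (filter id w) = j}. ad_word br x y w x)"

definition jacobson_s ::
  "nat \<Rightarrow> ('k::field \<Rightarrow> 'v::ab_group_add \<Rightarrow> 'v) \<Rightarrow> ('v \<Rightarrow> 'v \<Rightarrow> 'v) \<Rightarrow> nat \<Rightarrow> 'v \<Rightarrow> 'v \<Rightarrow> 'v" where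
  "jacobson_s p sc br i x y = sc (inverse (of_nat i)) (jacobson_coeff p br x y (i - 1))"

definition p_mapping ::
  "nat \<Rightarrow> ('k::field \<Rightarrow> 'v::ab_group_add \<Rightarrow> 'v) \<Rightarrow> ('v \<Rightarrow> 'v \<Rightarrow> 'v) \<Rightarrow> ('v \<Rightarrow> 'v) \<Rightarrow> bool" where
  "p_mapping p sc br pm \<longleftrightarrow>
     (\<forall>x. br (pm x) = (br x ^^ p)) \<and>
     (\<forall>c x. pm (sc c x) = sc (c ^ p) (pm x)) \<and>
     (\<forall>x y. pm (x + y) = pm x + pm y + (\<Sum>i=1..p-1. jacobson_s p sc br i x y))"

definition lie_derivation ::
  "('k::field \<Rightarrow> 'v::ab_group_add \<Rightarrow> 'v) \<Rightarrow> ('v \<Rightarrow> 'v \<Rightarrow> 'v) \<Rightarrow> ('v \<Rightarrow> 'v) \<Rightarrow> bool" where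
  "lie_derivation sc br D \<longleftrightarrow> Vector_Spaces.linear sc sc D \<and>
     (\<forall>x y. D (br x y) = br (D x) y + br x (D y))"

definition restricted_derivation ::
  "nat \<Rightarrow> ('v \<Rightarrow> 'v \<Rightarrow> 'v) \<Rightarrow> ('v \<Rightarrow> 'v) \<Rightarrow> ('v \<Rightarrow> 'v) \<Rightarrow> bool" where
  "restricted_derivation p br pm D \<longleftrightarrow> (\<forall>x. D (pm x) = (br x ^^ (p - 1)) (D x))"

definition alpha_derivation ::
  "('k::field \<Rightarrow> 'v::ab_group_add \<Rightarrow> 'v) \<Rightarrow> ('v \<Rightarrow> 'v \<Rightarrow> 'v) \<Rightarrow> ('v \<Rightarrow> 'v) \<Rightarrow> ('v \<Rightarrow> 'v) \<Rightarrow> bool" where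
  "alpha_derivation sc bra \<alpha> T \<longleftrightarrow> Vector_Spaces.linear sc sc T \<and> T \<circ> \<alpha> = \<alpha> \<circ> T \<and>
     (\<forall>x y. T (bra x y) = bra (T x) (\<alpha> y) + bra (\<alpha> x) (T y))"

fun hom_nest :: "('v \<Rightarrow> 'v \<Rightarrow> 'v) \<Rightarrow> ('v \<Rightarrow> 'v) \<Rightarrow> ('v \<Rightarrow> 'v) \<Rightarrow> 'v \<Rightarrow> nat \<Rightarrow> 'v" where
  "hom_nest bra \<alpha> T x 0 = T x"
| "hom_nest bra \<alpha> T x (Suc k) = bra ((\<alpha> ^^ Suc k) x) (hom_nest bra \<alpha> T x k)"

end

theory Submission
  imports Defs
begin

text \<open>Since \<open>\<alpha>\<close> is an involutive automorphism of the bracket commuting with \<open>D\<close> and \<open>p\<close>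
  is odd, \<open>\<alpha> ^^ (p - 1) = id\<close> and \<open>\<alpha> ^^ p = \<alpha>\<close>; moreover the nested \<open>\<alpha>\<close>-twisted bracket
  of depth \<open>k\<close> is \<open>\<alpha> ^^ (k + 1)\<close> applied to the untwisted one. Each of the three claims
  for \<open>\<alpha> \<circ> D\<close> thus reduces to the corresponding property of \<open>D\<close>.\<close>

lemma funpow_involution:
  assumes "\<alpha> \<circ> \<alpha> = id"
  shows "\<alpha> ^^ n = (if even n then id else \<alpha>)"
proof -
  have "\<alpha> (\<alpha> x) = x" for x
    using assms by (metis comp_apply id_apply)
  then show ?thesis
    by (induction n) (auto simp: fun_eq_iff)
qed

lemma funpow_comp_commute:
  assumes "f \<circ> g = g \<circ> f"
  shows "((f \<circ> g) ^^ n) x = (f ^^ n) ((g ^^ n) x)"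
proof -
  have "g (f y) = f (g y)" for y
    using assms by (metis comp_apply)
  then have "g ((f ^^ m) y) = (f ^^ m) (g y)" for m y
    by (induction m) simp_all
  then show ?thesis
    by (induction n arbitrary: x) simp_all
qed

lemma funpow_hom:
  assumes "\<forall>x y. \<alpha> (br x y) = br (\<alpha> x) (\<alpha> y)"
  shows "(\<alpha> ^^ n) (br x y) = br ((\<alpha> ^^ n) x) ((\<alpha> ^^ n) y)"
  by (induction n) (simp_all add: assms)

lemma hom_nest_twist:
  assumes "\<forall>x y. \<alpha> (br x y) = br (\<alpha> x) (\<alpha> y)"
  shows "hom_nest (\<lambda>x y. \<alpha> (br x y)) \<alpha> (\<alpha> \<circ> S) x k = (\<alpha> ^^ Suc k) ((br x ^^ k) (S x))"
  by (induction k) (simp_all add: funpow_hom[OF assms] assms)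

lemma alpha_derivation_twist:
  assumes lin: "Vector_Spaces.linear sc sc \<alpha>"
    and hom: "\<forall>x y. \<alpha> (br x y) = br (\<alpha> x) (\<alpha> y)"
    and der: "lie_derivation sc br D"
    and comm: "\<alpha> \<circ> D = D \<circ> \<alpha>"
  shows "alpha_derivation sc (\<lambda>x y. \<alpha> (br x y)) \<alpha> (\<alpha> \<circ> D)"
  unfolding alpha_derivation_def
proof (intro conjI allI)
  show "Vector_Spaces.linear sc sc (\<alpha> \<circ> D)"
    using der lin by (metis lie_derivation_def Vector_Spaces.linear_compose)
  show "\<alpha> \<circ> D \<circ> \<alpha> = \<alpha> \<circ> (\<alpha> \<circ> D)"
    by (metis comm comp_assoc)
  have add: "\<alpha> (u + v) = \<alpha> u + \<alpha> v" for u v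
    using lin by (simp add: Vector_Spaces.linear_iff)
  have D_alpha: "D (\<alpha> u) = \<alpha> (D u)" for u
    using comm by (metis comp_apply)
  fix x y
  have "D (\<alpha> (br x y)) = br (D (\<alpha> x)) (\<alpha> y) + br (\<alpha> x) (D (\<alpha> y))"
    using der hom by (simp add: lie_derivation_def)
  then show "(\<alpha> \<circ> D) (\<alpha> (br x y))
      = \<alpha> (br ((\<alpha> \<circ> D) x) (\<alpha> y)) + \<alpha> (br (\<alpha> x) ((\<alpha> \<circ> D) y))"
    by (simp add: add D_alpha)
qed

lemma restricted_derivation_twist:
  assumes hom: "\<forall>x y. \<alpha> (br x y) = br (\<alpha> x) (\<alpha> y)"
    and inv: "\<alpha> \<circ> \<alpha> = id"
    and "odd p"
    and restr: "restricted_derivation p br pm D"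
  shows "(\<alpha> \<circ> D) ((\<alpha> ^^ (p - 1)) (pm x)) = hom_nest (\<lambda>x y. \<alpha> (br x y)) \<alpha> (\<alpha> \<circ> D) x (p - 1)"
proof -
  have "Suc (p - 1) = p" and "even (p - 1)"
    using \<open>odd p\<close> by (auto simp: odd_pos)
  then show ?thesis
    using restr by (simp add: hom_nest_twist[OF hom] funpow_involution[OF inv] \<open>odd p\<close>
        restricted_derivation_def)
qed

lemma p_property_twist:
  assumes lin: "Vector_Spaces.linear sc sc \<alpha>"
    and inv: "\<alpha> \<circ> \<alpha> = id"
    and comm: "\<alpha> \<circ> D = D \<circ> \<alpha>"
    and "odd p"
    and D_pow: "\<forall>x. (D ^^ p) x = sc \<xi> (D x) + br a x"
  shows "((\<alpha> \<circ> D) ^^ p) x = sc \<xi> ((\<alpha> \<circ> D) ((\<alpha> ^^ (p - 1)) x)) + \<alpha> (br a ((\<alpha> ^^ (p - 1)) x))"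
proof -
  have "even (p - 1)"
    using \<open>odd p\<close> by (simp add: odd_pos)
  moreover have "\<alpha> (sc \<xi> (D x) + br a x) = sc \<xi> (\<alpha> (D x)) + \<alpha> (br a x)"
    using lin by (simp add: Vector_Spaces.linear_iff)
  ultimately show ?thesis
    using D_pow by (simp add: funpow_comp_commute[OF comm] funpow_involution[OF inv] \<open>odd p\<close>)
qed

theorem proposition5p3:
  fixes sc :: "'k::field \<Rightarrow> 'v::ab_group_add \<Rightarrow> 'v"
    and br :: "'v \<Rightarrow> 'v \<Rightarrow> 'v"
    and B :: "'v \<Rightarrow> 'v \<Rightarrow> 'k"
    and pm :: "'v \<Rightarrow> 'v"
    and \<alpha> D :: "'v \<Rightarrow> 'v"
    and p :: nat
  assumes charp: "CHAR('k) = p" and p_prime: "prime p" and p_gt2: "p > 2"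
    and quad: "quadratic_lie_algebra sc br B"
    and pmap: "p_mapping p sc br pm"
    and alpha_Es: "\<alpha> \<in> End_s sc B"
    and alpha_inv: "\<alpha> \<circ> \<alpha> = id"
    and alpha_hom: "\<forall>x y. \<alpha> (br x y) = br (\<alpha> x) (\<alpha> y)"
    and der: "lie_derivation sc br D"
    and restr: "restricted_derivation p br pm D"
    and comm: "\<alpha> \<circ> D = D \<circ> \<alpha>"
    and pprop: "\<exists>\<xi> a0. (\<forall>x. (D ^^ p) x = sc \<xi> (D x) + br a0 x) \<and> D a0 = 0"
  shows "alpha_derivation sc (\<lambda>x y. \<alpha> (br x y)) \<alpha> (\<alpha> \<circ> D)
    \<and> (\<forall>x. (\<alpha> \<circ> D) ((\<alpha> ^^ (p - 1)) (pm x))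
            = hom_nest (\<lambda>x y. \<alpha> (br x y)) \<alpha> (\<alpha> \<circ> D) x (p - 1))
    \<and> (\<exists>\<xi>' a0'. (\<forall>x. ((\<alpha> \<circ> D) ^^ p) x
            = sc \<xi>' ((\<alpha> \<circ> D) ((\<alpha> ^^ (p - 1)) x)) + \<alpha> (br a0' ((\<alpha> ^^ (p - 1)) x)))
          \<and> (\<alpha> \<circ> D) a0' = 0)"
proof -
  have lin: "Vector_Spaces.linear sc sc \<alpha>"
    using alpha_Es by (simp add: End_s_def)
  have "odd p"
    using p_prime p_gt2 by (simp add: prime_odd_nat)
  obtain \<xi> a where D_pow: "\<forall>x. (D ^^ p) x = sc \<xi> (D x) + br a x" and "D a = 0"
    using pprop by blast
  have "\<alpha> 0 + \<alpha> 0 = \<alpha> 0"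
    using lin by (metis Vector_Spaces.linear_iff add_0)
  then have "(\<alpha> \<circ> D) a = 0"
    using \<open>D a = 0\<close> by simp
  then show ?thesis
    using alpha_derivation_twist[OF lin alpha_hom der comm]
      restricted_derivation_twist[OF alpha_hom alpha_inv \<open>odd p\<close> restr]
      p_property_twist[where br = br, OF lin alpha_inv comm \<open>odd p\<close> D_pow]
    by blast
qed

end
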